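(* Let $R$ be a commutative ring with identity and $M$ a non-zero comultiplication $R$-module. Then the large sum graph $G'(M)$ is a null graph (has no vertices) if and only if $M$ is a cocyclic module.
   Context: An $R$-module $M$ is a comultiplication module if for every submodule $N$ of $M$ there is an ideal $I$ of $R$ with $N=\mathrm{Ann}_M(I)$. A submodule $N$ of $M$ is large in $M$ if $N\cap L\neq 0$ for every non-zero submodule $L$ of $M$. $\mathrm{Soc}(M)$ is the sum of all minimal submodules of $M$. $M$ is cocyclic if $\mathrm{Soc}(M)$ is a simple submodule of $M$ that is large in $M$. The large sum graph $G'(M)$ has as vertex set the set of all non-zero non-large submodules of $M$, and two distinct vertices $N,K$ are adjacent iff $N+K$ is a non-large submodule of $M$. *)

theory Defs
  imports "HOL-Algebra.Module" "HOL-Algebra.Ideal"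
begin

definition ann_M :: "('a, 'c) ring_scheme \<Rightarrow> ('a, 'b, 'd) module_scheme \<Rightarrow> 'a set \<Rightarrow> 'b set" where
  "ann_M R M I = {m \<in> carrier M. \<forall>r\<in>I. r \<odot>\<^bsub>M\<^esub> m = \<zero>\<^bsub>M\<^esub>}"

definition comultiplication_module :: "('a, 'c) ring_scheme \<Rightarrow> ('a, 'b, 'd) module_scheme \<Rightarrow> bool" where
  "comultiplication_module R M \<longleftrightarrow>
     (\<forall>N. submodule N R M \<longrightarrow> (\<exists>I. ideal I R \<and> N = ann_M R M I))"

definition msum :: "('a, 'b, 'd) module_scheme \<Rightarrow> 'b set \<Rightarrow> 'b set \<Rightarrow> 'b set" where
  "msum M N K = {x \<oplus>\<^bsub>M\<^esub> y | x y. x \<in> N \<and> y \<in> K}"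

definition large_submodule :: "('a, 'c) ring_scheme \<Rightarrow> ('a, 'b, 'd) module_scheme \<Rightarrow> 'b set \<Rightarrow> bool" where
  "large_submodule R M N \<longleftrightarrow> submodule N R M \<and>
     (\<forall>L. submodule L R M \<and> L \<noteq> {\<zero>\<^bsub>M\<^esub>} \<longrightarrow> N \<inter> L \<noteq> {\<zero>\<^bsub>M\<^esub>})"

definition minimal_submodule :: "('a, 'c) ring_scheme \<Rightarrow> ('a, 'b, 'd) module_scheme \<Rightarrow> 'b set \<Rightarrow> bool" where
  "minimal_submodule R M N \<longleftrightarrow> submodule N R M \<and> N \<noteq> {\<zero>\<^bsub>M\<^esub>} \<and>
     (\<forall>L. submodule L R M \<and> L \<subseteq> N \<longrightarrow> L = {\<zero>\<^bsub>M\<^esub>} \<or> L = N)"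

text \<open>Socle: the sum of all minimal submodules, i.e. the smallest submodule containing
  all of them (equal to the zero submodule if there are none).\<close>
definition socle :: "('a, 'c) ring_scheme \<Rightarrow> ('a, 'b, 'd) module_scheme \<Rightarrow> 'b set" where
  "socle R M = \<Inter>{L. submodule L R M \<and> \<Union>{N. minimal_submodule R M N} \<subseteq> L}"

definition cocyclic :: "('a, 'c) ring_scheme \<Rightarrow> ('a, 'b, 'd) module_scheme \<Rightarrow> bool" where
  "cocyclic R M \<longleftrightarrow> minimal_submodule R M (socle R M) \<and> large_submodule R M (socle R M)"

definition lsg_vertices :: "('a, 'c) ring_scheme \<Rightarrow> ('a, 'b, 'd) module_scheme \<Rightarrow> 'b set set" where
  "lsg_vertices R M = {N. submodule N R M \<and> N \<noteq> {\<zero>\<^bsub>M\<^esub>} \<and> \<not> large_submodule R M N}"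

definition lsg_adjacent :: "('a, 'c) ring_scheme \<Rightarrow> ('a, 'b, 'd) module_scheme \<Rightarrow> 'b set \<Rightarrow> 'b set \<Rightarrow> bool" where
  "lsg_adjacent R M N K \<longleftrightarrow> N \<in> lsg_vertices R M \<and> K \<in> lsg_vertices R M \<and> N \<noteq> K \<and>
     \<not> large_submodule R M (msum M N K)"

definition lsg_null :: "('a, 'c) ring_scheme \<Rightarrow> ('a, 'b, 'd) module_scheme \<Rightarrow> bool" where
  "lsg_null R M \<longleftrightarrow> lsg_vertices R M = {}"

end

theory Submission
  imports Defs
begin

text \<open>If every non-zero submodule is large, any two non-zero submodules meet non-trivially,
  i.e. M is uniform. In a uniform module the elements r with Ann_M(r) \<noteq> 0 form an ideal J,
  and comultiplication forces S = Ann_M(J) to lie in every non-zero submodule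
  N = Ann_M(I), because I \<subseteq> J. S is non-zero: otherwise, for m \<noteq> 0, writing
  Jm = Ann_M(I) gives I m \<subseteq> Ann_M(J) = 0, so m \<in> Jm, i.e. m = j m with j \<in> J;
  but then j acts as the identity on Rm, which meets Ann_M(j) non-trivially.
  Hence S is the unique minimal submodule, it is large, and M is cocyclic.
  Conversely the socle of a cocyclic module lies in every non-zero submodule.\<close>

definition uniform_module :: "('a, 'c) ring_scheme \<Rightarrow> ('a, 'b, 'd) module_scheme \<Rightarrow> bool" where
  "uniform_module R M \<longleftrightarrow>
     (\<forall>N K. submodule N R M \<longrightarrow> submodule K R M \<longrightarrow> N \<noteq> {\<zero>\<^bsub>M\<^esub>} \<longrightarrow> K \<noteq> {\<zero>\<^bsub>M\<^esub>}
        \<longrightarrow> N \<inter> K \<noteq> {\<zero>\<^bsub>M\<^esub>})"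

definition zero_divisors_on :: "('a, 'c) ring_scheme \<Rightarrow> ('a, 'b, 'd) module_scheme \<Rightarrow> 'a set" where
  "zero_divisors_on R M = {r \<in> carrier R. ann_M R M {r} \<noteq> {\<zero>\<^bsub>M\<^esub>}}"

lemma ann_M_antimono: "I \<subseteq> I' \<Longrightarrow> ann_M R M I' \<subseteq> ann_M R M I"
  unfolding ann_M_def by blast

lemma lsg_null_iff_uniform: "lsg_null R M \<longleftrightarrow> uniform_module R M"
  unfolding lsg_null_def lsg_vertices_def uniform_module_def large_submodule_def by blast

context module
begin

lemma submodule_zero_closed: "submodule N R M \<Longrightarrow> \<zero>\<^bsub>M\<^esub> \<in> N"
  using subgroup.one_closed[OF submodule.axioms(1)] by fastforce

lemma submodule_nonzero_elem:
  assumes "submodule N R M" "N \<noteq> {\<zero>\<^bsub>M\<^esub>}"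
  obtains x where "x \<in> N" "x \<noteq> \<zero>\<^bsub>M\<^esub>"
  using assms submodule_zero_closed by blast

lemma submodule_Int: "submodule N R M \<Longrightarrow> submodule K R M \<Longrightarrow> submodule (N \<inter> K) R M"
  by (rule submoduleI) (use submoduleE[of N] submoduleE[of K] submodule_zero_closed in auto)

lemma smult_commute:
  "a \<in> carrier R \<Longrightarrow> b \<in> carrier R \<Longrightarrow> x \<in> carrier M \<Longrightarrow> a \<odot>\<^bsub>M\<^esub> (b \<odot>\<^bsub>M\<^esub> x) = b \<odot>\<^bsub>M\<^esub> (a \<odot>\<^bsub>M\<^esub> x)"
  by (metis smult_assoc1 m_comm)

lemma submodule_ann_M: "I \<subseteq> carrier R \<Longrightarrow> submodule (ann_M R M I) R M"
  unfolding ann_M_def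
  by (rule submoduleI)
     (auto simp: smult_r_minus smult_r_distr smult_commute subsetD)

lemma submodule_ideal_smult:
  assumes "ideal T R" and m: "m \<in> carrier M"
  shows "submodule {t \<odot>\<^bsub>M\<^esub> m | t. t \<in> T} R M"
proof -
  interpret T: ideal T R by fact
  show ?thesis
  proof (rule submoduleI, goal_cases)
    case 2 show ?case using m by (metis (mono_tags, lifting) T.zero_closed mem_Collect_eq smult_l_null)
  qed (use m T.a_subset in \<open>auto simp: smult_l_minus[symmetric] smult_l_distr[symmetric]
        smult_assoc1[symmetric] subsetD T.I_l_closed\<close>)
qed

lemma cocyclic_imp_uniform:
  assumes "cocyclic R M"
  shows "uniform_module R M"
proof -
  let ?S = "socle R M"
  have S: "submodule ?S R M" "?S \<noteq> {\<zero>\<^bsub>M\<^esub>}"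
    and S_simple: "\<And>L. submodule L R M \<Longrightarrow> L \<subseteq> ?S \<Longrightarrow> L = {\<zero>\<^bsub>M\<^esub>} \<or> L = ?S"
    and S_large: "large_submodule R M ?S"
    using assms unfolding cocyclic_def minimal_submodule_def by auto
  have socle_le: "?S \<subseteq> N" if N: "submodule N R M" "N \<noteq> {\<zero>\<^bsub>M\<^esub>}" for N
  proof -
    have "N \<inter> ?S \<noteq> {\<zero>\<^bsub>M\<^esub>}"
      using S_large N unfolding large_submodule_def by (simp add: Int_commute)
    then have "N \<inter> ?S = ?S"
      using S_simple[OF submodule_Int[OF N(1) S(1)]] by blast
    then show ?thesis by blast
  qed
  show ?thesis
    unfolding uniform_module_def
  proof (intro allI impI)
    fix N K assume "submodule N R M" "submodule K R M" "N \<noteq> {\<zero>\<^bsub>M\<^esub>}" "K \<noteq> {\<zero>\<^bsub>M\<^esub>}"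
    then have "?S \<subseteq> N \<inter> K" using socle_le by blast
    then show "N \<inter> K \<noteq> {\<zero>\<^bsub>M\<^esub>}"
      using S submodule_zero_closed[OF S(1)] by blast
  qed
qed

lemma cocyclicI_least_nonzero_submodule:
  assumes S: "submodule S R M" "S \<noteq> {\<zero>\<^bsub>M\<^esub>}"
    and least: "\<And>N. submodule N R M \<Longrightarrow> N \<noteq> {\<zero>\<^bsub>M\<^esub>} \<Longrightarrow> S \<subseteq> N"
  shows "cocyclic R M"
proof -
  have min: "minimal_submodule R M S"
    unfolding minimal_submodule_def using S least by auto
  have "minimal_submodule R M N \<longleftrightarrow> N = S" for N
  proof
    assume N: "minimal_submodule R M N"
    then have "S \<subseteq> N" using least unfolding minimal_submodule_def by blast
    then show "N = S" using N S unfolding minimal_submodule_def by blast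
  qed (use min in simp)
  then have "\<Union>{N. minimal_submodule R M N} = S" by auto
  then have "socle R M = S"
    unfolding socle_def using S(1) by (intro antisym Inter_lower) auto
  moreover have "large_submodule R M S"
    unfolding large_submodule_def using S least by (auto simp: Int_absorb2)
  ultimately show ?thesis unfolding cocyclic_def using min by simp
qed

lemma ann_M_singleton: "ann_M R M {r} = {x \<in> carrier M. r \<odot>\<^bsub>M\<^esub> x = \<zero>\<^bsub>M\<^esub>}"
  unfolding ann_M_def by simp

lemma zero_divisors_on_mult:
  assumes "a \<in> zero_divisors_on R M" "x \<in> carrier R"
  shows "x \<otimes> a \<in> zero_divisors_on R M"
proof -
  have a: "a \<in> carrier R" "ann_M R M {a} \<noteq> {\<zero>\<^bsub>M\<^esub>}"
    using assms by (auto simp: zero_divisors_on_def)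
  have "ann_M R M {a} \<subseteq> ann_M R M {x \<otimes> a}"
    using a(1) assms(2) by (auto simp: ann_M_singleton smult_assoc1)
  moreover have "\<zero>\<^bsub>M\<^esub> \<in> ann_M R M {a}"
    using submodule_zero_closed[OF submodule_ann_M] a(1) by blast
  ultimately have "ann_M R M {x \<otimes> a} \<noteq> {\<zero>\<^bsub>M\<^esub>}" using a(2) by blast
  then show ?thesis using a(1) assms(2) by (simp add: zero_divisors_on_def)
qed

lemma zero_divisors_on_ideal:
  assumes nz: "carrier M \<noteq> {\<zero>\<^bsub>M\<^esub>}" and uni: "uniform_module R M"
  shows "ideal (zero_divisors_on R M) R"
proof (rule idealI[OF ring_axioms], rule R.add.subgroupI, goal_cases)
  case 2
  have "ann_M R M {\<zero>} = carrier M" by (auto simp: ann_M_singleton)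
  then have "\<zero> \<in> zero_divisors_on R M"
    using nz by (simp add: zero_divisors_on_def)
  then show ?case by blast
next
  case (3 a)
  then have a: "a \<in> carrier R" "ann_M R M {a} \<noteq> {\<zero>\<^bsub>M\<^esub>}"
    by (auto simp: zero_divisors_on_def)
  have "ann_M R M {\<ominus> a} = ann_M R M {a}"
    unfolding ann_M_singleton using a(1) by (auto simp: smult_l_minus M.minus_equality)
  then have "\<ominus> a \<in> zero_divisors_on R M"
    using a by (simp add: zero_divisors_on_def)
  then show ?case by (simp add: a_inv_def)
next
  case (4 a b)
  then have a: "a \<in> carrier R" "submodule (ann_M R M {a}) R M" "ann_M R M {a} \<noteq> {\<zero>\<^bsub>M\<^esub>}"
    and b: "b \<in> carrier R" "submodule (ann_M R M {b}) R M" "ann_M R M {b} \<noteq> {\<zero>\<^bsub>M\<^esub>}"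
    using submodule_ann_M by (auto simp: zero_divisors_on_def)
  have "ann_M R M {a} \<inter> ann_M R M {b} \<noteq> {\<zero>\<^bsub>M\<^esub>}"
    using uni a b unfolding uniform_module_def by blast
  moreover have "ann_M R M {a} \<inter> ann_M R M {b} \<subseteq> ann_M R M {a \<oplus> b}"
    using a(1) b(1) by (auto simp: ann_M_singleton smult_l_distr)
  moreover have "\<zero>\<^bsub>M\<^esub> \<in> ann_M R M {a} \<inter> ann_M R M {b}"
    using a(2) b(2) submodule_zero_closed by blast
  ultimately have "ann_M R M {a \<oplus> b} \<noteq> {\<zero>\<^bsub>M\<^esub>}" by blast
  then show ?case using a(1) b(1) by (simp add: zero_divisors_on_def)
next
  case (5 a x)
  then show ?case by (rule zero_divisors_on_mult)
next
  case (6 a x)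
  then show ?case
    using zero_divisors_on_mult[of a x] by (simp add: zero_divisors_on_def m_comm)
qed (auto simp: zero_divisors_on_def)

lemma ann_M_zero_divisors_on_le:
  assumes "comultiplication_module R M" and N: "submodule N R M" "N \<noteq> {\<zero>\<^bsub>M\<^esub>}"
  shows "ann_M R M (zero_divisors_on R M) \<subseteq> N"
proof -
  obtain I where I: "ideal I R" "N = ann_M R M I"
    using assms unfolding comultiplication_module_def by blast
  have "I \<subseteq> zero_divisors_on R M"
  proof
    fix i assume i: "i \<in> I"
    then have "N \<subseteq> ann_M R M {i}" unfolding I(2) by (intro ann_M_antimono) simp
    moreover obtain x where "x \<in> N" "x \<noteq> \<zero>\<^bsub>M\<^esub>"
      using submodule_nonzero_elem[OF N] .
    ultimately have "ann_M R M {i} \<noteq> {\<zero>\<^bsub>M\<^esub>}" by blast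
    then show "i \<in> zero_divisors_on R M"
      using ideal.Icarr[OF I(1) i] by (simp add: zero_divisors_on_def)
  qed
  then show ?thesis unfolding I(2) by (rule ann_M_antimono)
qed

lemma uniform_zero_divisor_smult_neq:
  assumes uni: "uniform_module R M" and j: "j \<in> zero_divisors_on R M"
    and m: "m \<in> carrier M" "m \<noteq> \<zero>\<^bsub>M\<^esub>"
  shows "j \<odot>\<^bsub>M\<^esub> m \<noteq> m"
proof
  assume fix_m: "j \<odot>\<^bsub>M\<^esub> m = m"
  let ?Rm = "{r \<odot>\<^bsub>M\<^esub> m | r. r \<in> carrier R}"
  have jc: "j \<in> carrier R" and ann_j: "submodule (ann_M R M {j}) R M" "ann_M R M {j} \<noteq> {\<zero>\<^bsub>M\<^esub>}"
    using j submodule_ann_M[of "{j}"] unfolding zero_divisors_on_def by auto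
  have Rm: "submodule ?Rm R M" using submodule_ideal_smult[OF oneideal m(1)] .
  moreover have "m \<in> ?Rm"
    using smult_one[OF m(1)] R.one_closed by force
  then have "?Rm \<noteq> {\<zero>\<^bsub>M\<^esub>}" using m(2) by blast
  ultimately have "ann_M R M {j} \<inter> ?Rm \<noteq> {\<zero>\<^bsub>M\<^esub>}"
    using uni ann_j unfolding uniform_module_def by blast
  then obtain y where "y \<in> ann_M R M {j} \<inter> ?Rm" "y \<noteq> \<zero>\<^bsub>M\<^esub>"
    using submodule_nonzero_elem[OF submodule_Int[OF ann_j(1) Rm]] by blast
  then obtain r where r: "r \<in> carrier R" "j \<odot>\<^bsub>M\<^esub> (r \<odot>\<^bsub>M\<^esub> m) = \<zero>\<^bsub>M\<^esub>" "r \<odot>\<^bsub>M\<^esub> m \<noteq> \<zero>\<^bsub>M\<^esub>"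
    unfolding ann_M_singleton by blast
  have "j \<odot>\<^bsub>M\<^esub> (r \<odot>\<^bsub>M\<^esub> m) = r \<odot>\<^bsub>M\<^esub> m"
    using smult_commute[OF jc r(1) m(1)] fix_m by simp
  with r show False by simp
qed

lemma ann_M_zero_divisors_on_nonzero:
  assumes nz: "carrier M \<noteq> {\<zero>\<^bsub>M\<^esub>}" and comult: "comultiplication_module R M"
    and uni: "uniform_module R M"
  shows "ann_M R M (zero_divisors_on R M) \<noteq> {\<zero>\<^bsub>M\<^esub>}"
proof
  let ?J = "zero_divisors_on R M"
  assume S0: "ann_M R M ?J = {\<zero>\<^bsub>M\<^esub>}"
  obtain m where m: "m \<in> carrier M" "m \<noteq> \<zero>\<^bsub>M\<^esub>"
    using nz submodule_zero_closed[OF carrier_is_submodule] by blast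
  have J: "ideal ?J R" using zero_divisors_on_ideal[OF nz uni] .
  obtain I where I: "ideal I R" "{j \<odot>\<^bsub>M\<^esub> m | j. j \<in> ?J} = ann_M R M I"
    using comult submodule_ideal_smult[OF J m(1)] unfolding comultiplication_module_def by blast
  have "i \<odot>\<^bsub>M\<^esub> m = \<zero>\<^bsub>M\<^esub>" if i: "i \<in> I" for i
  proof -
    have ic: "i \<in> carrier R" using ideal.Icarr[OF I(1) i] .
    have "j \<odot>\<^bsub>M\<^esub> (i \<odot>\<^bsub>M\<^esub> m) = \<zero>\<^bsub>M\<^esub>" if j: "j \<in> ?J" for j
    proof -
      have "j \<odot>\<^bsub>M\<^esub> m \<in> ann_M R M I" using I(2) j by blast
      then have "i \<odot>\<^bsub>M\<^esub> (j \<odot>\<^bsub>M\<^esub> m) = \<zero>\<^bsub>M\<^esub>" using i unfolding ann_M_def by blast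
      then show ?thesis using smult_commute ic j m(1) unfolding zero_divisors_on_def by auto
    qed
    then have "i \<odot>\<^bsub>M\<^esub> m \<in> ann_M R M ?J" unfolding ann_M_def using ic m(1) by blast
    then show ?thesis using S0 by blast
  qed
  then have "m \<in> ann_M R M I" unfolding ann_M_def using m(1) by blast
  then have "m \<in> {j \<odot>\<^bsub>M\<^esub> m | j. j \<in> ?J}" using I(2) by simp
  then obtain j where "j \<in> ?J" "m = j \<odot>\<^bsub>M\<^esub> m" by blast
  then show False using uniform_zero_divisor_smult_neq[OF uni _ m] by metis
qed

lemma uniform_comultiplication_imp_cocyclic:
  assumes nz: "carrier M \<noteq> {\<zero>\<^bsub>M\<^esub>}" and comult: "comultiplication_module R M"
    and uni: "uniform_module R M"
  shows "cocyclic R M"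
proof (rule cocyclicI_least_nonzero_submodule)
  show "submodule (ann_M R M (zero_divisors_on R M)) R M"
    by (rule submodule_ann_M) (auto simp: zero_divisors_on_def)
qed (use ann_M_zero_divisors_on_nonzero[OF nz comult uni] ann_M_zero_divisors_on_le[OF comult] in auto)

end

theorem proposition2p4:
  fixes R :: "('a, 'c) ring_scheme" and M :: "('a, 'b, 'd) module_scheme"
  assumes "module R M"
    and "carrier M \<noteq> {\<zero>\<^bsub>M\<^esub>}"
    and "comultiplication_module R M"
  shows "lsg_null R M \<longleftrightarrow> cocyclic R M"
proof -
  interpret module R M by fact
  have "lsg_null R M \<longleftrightarrow> uniform_module R M" by (rule lsg_null_iff_uniform)
  also have "\<dots> \<longleftrightarrow> cocyclic R M"
    using cocyclic_imp_uniform uniform_comultiplication_imp_cocyclic[OF assms(2,3)] by blast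
  finally show ?thesis .
qed

end
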